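(* Let $\Delta$ be a simplicial complex on $[n]$ with facets $F_1,\ldots,F_t$. Then $\Delta$ is a quasi-tree if and only if the matrix $M_\Delta$ contains a $(t-1)\times t$ submatrix $M^\sharp_\Delta$ (formed by $t-1$ of its rows) with the property that, for each $1\leq j\leq t$, the $(t-1)\times(t-1)$ matrix $M^\sharp_\Delta(j)$ obtained by deleting the $j$th column of $M^\sharp_\Delta$ satisfies $\det(M^\sharp_\Delta(j))=\pm\, x_{[n]}/x_{F_j}$.
   Context: $S=K[x_1,\ldots,x_n]$, $x_F=\prod_{i\in F}x_i$. A simplicial complex on $[n]$ is a collection of subsets of $[n]$ containing all singletons and closed under taking subsets; facets are maximal faces. $M_\Delta$ is the $\binom t2\times t$ matrix over $S$ with rows indexed by pairs $(i,j)$, $1\le i<j\le t$, and columns by $k\in[t]$, whose entries are $a^{(i,j)}_i=x_{F_i\setminus F_j}$, $a^{(i,j)}_j=x_{F_j\setminus F_i}$, and $a^{(i,j)}_k=0$ for $k\notin\{i,j\}$. A facet $F$ is a leaf if either it is the only facet, or there is a facet $G\neq F$ with $H\cap F\subseteq G\cap F$ for every facet $H\neq F$. $\Delta$ is a quasi-tree if its facets can be labeled so that, in this labeling $G_1,\ldots,G_m$, each $G_i$ is a leaf of the complex generated by $G_1,\ldots,G_i$. *)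

theory Defs
  imports "HOL-Library.Poly_Mapping" "Jordan_Normal_Form.Determinant"
begin

text \<open>The polynomial ring S = K[x_1,...,x_n] is represented as the type mpoly below:
  finitely supported maps from exponent vectors to coefficients.\<close>

type_synonym 'k mpoly = "(nat \<Rightarrow>\<^sub>0 nat) \<Rightarrow>\<^sub>0 'k"

definition var :: "nat \<Rightarrow> 'k::field mpoly" where
  "var i = Poly_Mapping.single (Poly_Mapping.single i 1) 1"

definition xprod :: "nat set \<Rightarrow> 'k::field mpoly" where
  "xprod F = (\<Prod>i\<in>F. var i)"

definition simplicial_complex :: "nat \<Rightarrow> nat set set \<Rightarrow> bool" where
  "simplicial_complex n \<Delta> \<longleftrightarrow>
     \<Delta> \<subseteq> Pow {1..n} \<and> (\<forall>i\<in>{1..n}. {i} \<in> \<Delta>) \<and>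
     (\<forall>F\<in>\<Delta>. \<forall>G. G \<subseteq> F \<longrightarrow> G \<in> \<Delta>)"

definition facets :: "nat set set \<Rightarrow> nat set set" where
  "facets \<Delta> = {F \<in> \<Delta>. \<forall>G\<in>\<Delta>. F \<subseteq> G \<longrightarrow> G = F}"

definition generated :: "nat set set \<Rightarrow> nat set set" where
  "generated Gs = {A. \<exists>G\<in>Gs. A \<subseteq> G}"

definition is_leaf :: "nat set set \<Rightarrow> nat set \<Rightarrow> bool" where
  "is_leaf \<Delta> F \<longleftrightarrow> F \<in> facets \<Delta> \<and>
     (facets \<Delta> = {F} \<or>
      (\<exists>G\<in>facets \<Delta>. G \<noteq> F \<and> (\<forall>H\<in>facets \<Delta>. H \<noteq> F \<longrightarrow> H \<inter> F \<subseteq> G \<inter> F)))"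

definition quasi_tree :: "nat set set \<Rightarrow> bool" where
  "quasi_tree \<Delta> \<longleftrightarrow> (\<exists>Gs. distinct Gs \<and> set Gs = facets \<Delta> \<and>
     (\<forall>i<length Gs. is_leaf (generated (set (take (Suc i) Gs))) (Gs ! i)))"

text \<open>Entry of M_\<Delta> in row (i,j) (with i<j) and column k; facets are indexed 0..t-1
  by the list Fs.\<close>
definition M_entry :: "nat set list \<Rightarrow> nat \<times> nat \<Rightarrow> nat \<Rightarrow> 'k::field mpoly" where
  "M_entry Fs p k = (let (i, j) = p in
     if k = i then xprod (Fs ! i - Fs ! j)
     else if k = j then xprod (Fs ! j - Fs ! i) else 0)"

definition M_sub :: "nat set list \<Rightarrow> (nat \<times> nat) list \<Rightarrow> 'k::field mpoly mat" where
  "M_sub Fs rs = mat (length rs) (length Fs) (\<lambda>(r, k). M_entry Fs (rs ! r) k)"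

definition del_col :: "'a mat \<Rightarrow> nat \<Rightarrow> 'a mat" where
  "del_col A j = mat (dim_row A) (dim_col A - 1)
     (\<lambda>(r, c). A $$ (r, if c < j then c else Suc c))"

end

theory Submission
  imports Defs
begin

(* Read the t - 1 rows of a submatrix of M_Delta as edges of a graph on the facets.  In the
   Leibniz expansion of the minor without column j, a nonzero term chooses for every edge one
   of its endpoints, each facet other than F_j exactly once, and is the product of the
   monomials x_(F_a - F_b) over the edges {a, b} with chosen endpoint a.
   For a quasi-tree, join every facet to the facet through which it meets the earlier ones.
   On this tree the only such choice takes the endpoint farther from j, and the differences
   F_a - F_b partition [n] - F_j, so every minor is +-x_([n] - F_j).
   Conversely, if every minor is +-x_([n] - F_j), some term equals this squarefree monomial,
   so for every root j some choice has differences partitioning [n] - F_j.  A graph with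
   t - 1 edges has a vertex c of degree at most one; the choice for a root j other than c
   must take c on its edge {c, p}, and the choices for the other roots force
   F_h \<inter> F_c \<subseteq> F_p for all h.  Hence c is a leaf, and removing it yields a
   leaf order by induction. *)

section \<open>Edges and rooted choices\<close>

definition endpoints :: "'v \<times> 'v \<Rightarrow> 'v set" where
  "endpoints e = {fst e, snd e}"

definition other_end :: "'v \<times> 'v \<Rightarrow> 'v \<Rightarrow> 'v" where
  "other_end e v = (if v = fst e then snd e else fst e)"

definition edge :: "'v::linorder \<Rightarrow> 'v \<Rightarrow> 'v \<times> 'v" where
  "edge u v = (min u v, max u v)"

definition ordered_edges :: "'v::linorder set \<Rightarrow> ('v \<times> 'v) set \<Rightarrow> bool" where
  "ordered_edges V E \<longleftrightarrow> (\<forall>e\<in>E. fst e < snd e \<and> fst e \<in> V \<and> snd e \<in> V)"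

lemma endpoints_edge [simp]: "endpoints (edge u v) = {u, v}"
  by (auto simp: endpoints_def edge_def min_def max_def)

lemma other_end_edge [simp]:
  assumes "u \<noteq> v"
  shows "other_end (edge u v) u = v" and "other_end (edge u v) v = u"
  using assms by (auto simp: other_end_def edge_def min_def max_def)

lemma edge_other_end:
  assumes "fst e < snd e" and "u \<in> endpoints e"
  shows "e = edge u (other_end e u)"
  using assms by (cases e) (auto simp: endpoints_def other_end_def edge_def)

lemma ordered_edges_avoid:
  assumes "ordered_edges V E" and "u \<notin> V" and "e \<in> E"
  shows "u \<notin> endpoints e"
  using assms by (auto simp: ordered_edges_def endpoints_def)

lemma edge_notin_ordered_edges:
  assumes "ordered_edges V E" and "u \<notin> V"
  shows "edge u v \<notin> E"
  using ordered_edges_avoid[OF assms] by (metis endpoints_edge insertI1)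

lemma ordered_edges_finite:
  assumes "finite V" and "ordered_edges V E"
  shows "finite E"
proof (rule finite_subset)
  show "E \<subseteq> V \<times> V" using assms(2) by (auto simp: ordered_edges_def mem_Times_iff)
qed (use assms(1) in simp)

lemma ordered_edges_atLeastLessThan:
  "ordered_edges {0::nat..<t} E \<longleftrightarrow> (\<forall>(i, j)\<in>E. i < j \<and> j < t)"
  by (auto simp: ordered_edges_def)

lemma degree_sum:
  assumes "finite V" and "ordered_edges V E"
  shows "(\<Sum>v\<in>V. card {e\<in>E. v \<in> endpoints e}) = 2 * card E"
proof -
  have finE: "finite E" using ordered_edges_finite[OF assms] .
  have "(\<Sum>v\<in>V. card {e\<in>E. v \<in> endpoints e}) = (\<Sum>v\<in>V. \<Sum>e\<in>E. of_bool (v \<in> endpoints e))"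
    using finE by (simp add: Collect_conj_eq)
  also have "\<dots> = (\<Sum>e\<in>E. \<Sum>v\<in>V. of_bool (v \<in> endpoints e))"
    by (rule sum.swap)
  also have "\<dots> = (\<Sum>e\<in>E. 2)"
  proof (rule sum.cong[OF refl])
    fix e assume "e \<in> E"
    then have "V \<inter> {v. v \<in> endpoints e} = {fst e, snd e}" "fst e \<noteq> snd e"
      using assms(2) by (auto simp: ordered_edges_def endpoints_def)
    then show "(\<Sum>v\<in>V. of_bool (v \<in> endpoints e)) = (2::nat)"
      using assms(1) by simp
  qed
  finally show ?thesis by simp
qed

text \<open>On a tree the only rooted choice takes, on every edge, the endpoint farther from the
  root j.\<close>
definition rooted_choice :: "'v set \<Rightarrow> ('v \<times> 'v) set \<Rightarrow> 'v \<Rightarrow> ('v \<times> 'v \<Rightarrow> 'v) \<Rightarrow> bool" where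
  "rooted_choice V E j s \<longleftrightarrow> (\<forall>e\<in>E. s e \<in> endpoints e) \<and> bij_betw s E (V - {j})"

lemma rooted_choice_remove_leaf:
  assumes E: "ordered_edges V E" and c: "c \<notin> V" and p: "p \<in> V" and j: "j \<in> insert c V"
    and s: "rooted_choice (insert c V) (insert (edge c p) E) j s"
  shows "s (edge c p) = (if j = c then p else c)"
    and "rooted_choice V E (if j = c then p else j) s"
proof -
  have cE: "c \<notin> endpoints e" if "e \<in> E" for e using ordered_edges_avoid[OF E c that] .
  have e0: "edge c p \<notin> E" using edge_notin_ordered_edges[OF E c] .
  have ends: "\<forall>e\<in>insert (edge c p) E. s e \<in> endpoints e"
    and bij: "bij_betw s (insert (edge c p) E) (insert c V - {j})"
    using s by (auto simp: rooted_choice_def)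
  show s0: "s (edge c p) = (if j = c then p else c)"
  proof (cases "j = c")
    case True
    have "s (edge c p) \<in> {c, p}" "s (edge c p) \<in> insert c V - {j}"
      using ends bij_betw_apply[OF bij] by auto
    then show ?thesis using True by auto
  next
    case False
    then have "c \<in> s ` insert (edge c p) E" using bij_betw_imp_surj_on[OF bij] by auto
    then obtain e where "e \<in> insert (edge c p) E" "s e = c" by blast
    then show ?thesis using ends cE False by fastforce
  qed
  have "s (edge c p) \<in> insert c V - {j}" using bij_betw_apply[OF bij] by simp
  then have "bij_betw s (insert (edge c p) E - {edge c p}) (insert c V - {j} - {s (edge c p)})"
    by (intro bij_betw_DiffI[OF bij bij_betw_singletonI]) auto
  moreover have "insert c V - {j} - {s (edge c p)} = V - {if j = c then p else j}"
    using s0 c j by auto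
  ultimately show "rooted_choice V E (if j = c then p else j) s"
    using ends e0 by (simp add: rooted_choice_def)
qed

lemma rooted_choice_add_leaf:
  assumes E: "ordered_edges V E" and c: "c \<notin> V" and p: "p \<in> V" and j: "j \<in> insert c V"
    and s: "rooted_choice V E (if j = c then p else j) s"
  shows "rooted_choice (insert c V) (insert (edge c p) E) j (s(edge c p := if j = c then p else c))"
proof -
  let ?s = "s(edge c p := if j = c then p else c)"
  have e0: "edge c p \<notin> E" using edge_notin_ordered_edges[OF E c] .
  have "bij_betw ?s E (V - {if j = c then p else j}) = bij_betw s E (V - {if j = c then p else j})"
    by (rule bij_betw_cong) (use e0 in auto)
  then have "bij_betw ?s E (V - {if j = c then p else j})"
    using s by (simp add: rooted_choice_def)
  then have "bij_betw ?s (E \<union> {edge c p}) ((V - {if j = c then p else j}) \<union> {if j = c then p else c})"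
    by (rule bij_betw_combine) (use c in auto)
  moreover have "(V - {if j = c then p else j}) \<union> {if j = c then p else c} = insert c V - {j}"
    using c p j by auto
  ultimately show ?thesis using s e0 by (auto simp: rooted_choice_def)
qed

definition chosen_diff :: "('v \<Rightarrow> 'a set) \<Rightarrow> ('v \<times> 'v \<Rightarrow> 'v) \<Rightarrow> 'v \<times> 'v \<Rightarrow> 'a set" where
  "chosen_diff F s e = F (s e) - F (other_end e (s e))"

text \<open>For an exact choice s the product over E of the monomials x_(chosen_diff F s e) is the
  squarefree monomial x_((\<Union>F) - F j).\<close>
definition exact_choice ::
    "('v \<Rightarrow> 'a set) \<Rightarrow> 'v set \<Rightarrow> ('v \<times> 'v) set \<Rightarrow> 'v \<Rightarrow> ('v \<times> 'v \<Rightarrow> 'v) \<Rightarrow> bool" where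
  "exact_choice F V E j s \<longleftrightarrow> rooted_choice V E j s \<and> disjoint_family_on (chosen_diff F s) E \<and>
     (\<Union>e\<in>E. chosen_diff F s e) = (\<Union>v\<in>V. F v) - F j"

lemma exact_choice_add_leaf:
  assumes E: "ordered_edges V E" and c: "c \<notin> V" and p: "p \<in> V" and j: "j \<in> insert c V"
    and leaf: "\<forall>h\<in>V. F h \<inter> F c \<subseteq> F p"
    and s: "exact_choice F V E (if j = c then p else j) s"
  shows "exact_choice F (insert c V) (insert (edge c p) E) j (s(edge c p := if j = c then p else c))"
proof -
  let ?s = "s(edge c p := if j = c then p else c)"
  have cp: "c \<noteq> p" using c p by auto
  have e0: "edge c p \<notin> E" using edge_notin_ordered_edges[OF E c] .
  have D_E: "chosen_diff F ?s e = chosen_diff F s e" if "e \<in> E" for e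
    using that e0 by (auto simp: chosen_diff_def)
  have D_e0: "chosen_diff F ?s (edge c p) = (if j = c then F p - F c else F c - F p)"
    using cp by (simp add: chosen_diff_def)
  have disj: "disjoint_family_on (chosen_diff F s) E"
    and U: "(\<Union>e\<in>E. chosen_diff F s e) = (\<Union>v\<in>V. F v) - F (if j = c then p else j)"
    using s by (auto simp: exact_choice_def)
  have "disjoint_family_on (chosen_diff F ?s) (insert (edge c p) E)"
    unfolding disjoint_family_on_insert[OF e0]
  proof
    show "chosen_diff F ?s (edge c p) \<inter> \<Union> (chosen_diff F ?s ` E) = {}"
      unfolding D_e0 using D_E U leaf by (auto split: if_splits)
    show "disjoint_family_on (chosen_diff F ?s) E"
      using disj D_E by (simp add: disjoint_family_on_def)
  qed
  moreover have "(\<Union>e\<in>insert (edge c p) E. chosen_diff F ?s e) = (\<Union>v\<in>insert c V. F v) - F j"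
    using D_E D_e0 U leaf p j by (auto split: if_splits)
  ultimately show ?thesis
    using rooted_choice_add_leaf[OF E c p j] s by (simp add: exact_choice_def)
qed

lemma exact_choice_leaf_inter:
  assumes E: "ordered_edges V E" and c: "c \<notin> V" and p: "p \<in> V" and h: "h \<in> V"
    and s: "exact_choice F (insert c V) (insert (edge c p) E) h s"
  shows "F h \<inter> F c \<subseteq> F p"
proof -
  have rooted: "rooted_choice (insert c V) (insert (edge c p) E) h s"
    using s by (simp add: exact_choice_def)
  have "h \<noteq> c" "c \<noteq> p" using h c p by auto
  then have "chosen_diff F s (edge c p) = F c - F p"
    using rooted_choice_remove_leaf(1)[OF E c p _ rooted] h by (simp add: chosen_diff_def)
  moreover have "chosen_diff F s (edge c p) \<subseteq> (\<Union>v\<in>insert c V. F v) - F h"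
    using s by (auto simp: exact_choice_def)
  ultimately show ?thesis by blast
qed

lemma exact_choice_remove_leaf:
  assumes E: "ordered_edges V E" and c: "c \<notin> V" and p: "p \<in> V" and j: "j \<in> V"
    and leaf: "\<forall>h\<in>V. F h \<inter> F c \<subseteq> F p"
    and s: "exact_choice F (insert c V) (insert (edge c p) E) j s"
  shows "exact_choice F V E j s"
proof -
  have e0: "edge c p \<notin> E" using edge_notin_ordered_edges[OF E c] .
  have rooted: "rooted_choice (insert c V) (insert (edge c p) E) j s"
    and disj: "disjoint_family_on (chosen_diff F s) (insert (edge c p) E)"
    and U: "(\<Union>e\<in>insert (edge c p) E. chosen_diff F s e) = (\<Union>v\<in>insert c V. F v) - F j"
    using s by (auto simp: exact_choice_def)
  have "j \<noteq> c" "c \<noteq> p" using j c p by auto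
  then have D_e0: "chosen_diff F s (edge c p) = F c - F p" and "rooted_choice V E j s"
    using rooted_choice_remove_leaf[OF E c p _ rooted] j by (simp_all add: chosen_diff_def)
  have "(\<Union>e\<in>E. chosen_diff F s e) = (\<Union>v\<in>insert c V. F v) - F j - (F c - F p)"
    using U disj e0 unfolding D_e0[symmetric] disjoint_family_on_insert[OF e0] by blast
  also have "\<dots> = (\<Union>v\<in>V. F v) - F j"
    using leaf p by blast
  finally show ?thesis
    using \<open>rooted_choice V E j s\<close> disj by (auto simp: exact_choice_def intro: disjoint_family_on_mono)
qed

section \<open>Leaf orders and their trees\<close>

definition leaf_order :: "('v \<Rightarrow> 'a set) \<Rightarrow> 'v list \<Rightarrow> bool" where
  "leaf_order F L \<longleftrightarrow> (\<forall>i<length L. 0 < i \<longrightarrow> (\<exists>k<i. \<forall>h<i. F (L ! h) \<inter> F (L ! i) \<subseteq> F (L ! k)))"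

lemma leaf_order_map: "leaf_order F (map g L) \<longleftrightarrow> leaf_order (F \<circ> g) L"
  unfolding leaf_order_def
  by (auto simp: less_trans[of _ _ "length L"]) (metis nth_map order.strict_trans)+

lemma leaf_order_snoc:
  "leaf_order F (L @ [c]) \<longleftrightarrow>
     leaf_order F L \<and> (L \<noteq> [] \<longrightarrow> (\<exists>p\<in>set L. \<forall>h\<in>set L. F h \<inter> F c \<subseteq> F p))"
proof -
  have last: "(\<exists>k<length L. \<forall>h<length L. F (L ! h) \<inter> F c \<subseteq> F (L ! k)) \<longleftrightarrow>
      (\<exists>p\<in>set L. \<forall>h\<in>set L. F h \<inter> F c \<subseteq> F p)"
    by (metis in_set_conv_nth)
  have prefix: "(0 < i \<longrightarrow> (\<exists>k<i. \<forall>h<i. F ((L @ [c]) ! h) \<inter> F ((L @ [c]) ! i) \<subseteq> F ((L @ [c]) ! k)))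
      \<longleftrightarrow> (0 < i \<longrightarrow> (\<exists>k<i. \<forall>h<i. F (L ! h) \<inter> F (L ! i) \<subseteq> F (L ! k)))" if "i < length L" for i
    using that by (auto simp: nth_append less_trans[of _ _ "length L"])
  have "leaf_order F (L @ [c]) \<longleftrightarrow> leaf_order F L \<and>
      (0 < length L \<longrightarrow> (\<exists>k<length L. \<forall>h<length L. F (L ! h) \<inter> F c \<subseteq> F (L ! k)))"
    unfolding leaf_order_def using prefix by (auto simp: nth_append less_Suc_eq)
  then show ?thesis using last by auto
qed

inductive leaf_tree :: "('v::linorder \<Rightarrow> 'a set) \<Rightarrow> 'v list \<Rightarrow> ('v \<times> 'v) set \<Rightarrow> bool"
  for F where
  Nil: "leaf_tree F [] {}"
| single: "leaf_tree F [c] {}"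
| snoc: "leaf_tree F L E \<Longrightarrow> L \<noteq> [] \<Longrightarrow> c \<notin> set L \<Longrightarrow> p \<in> set L \<Longrightarrow>
    \<forall>h\<in>set L. F h \<inter> F c \<subseteq> F p \<Longrightarrow> leaf_tree F (L @ [c]) (insert (edge c p) E)"

lemma leaf_tree_edges:
  assumes "leaf_tree F L E"
  shows "distinct L \<and> ordered_edges (set L) E \<and> finite E \<and> card E = length L - 1"
  using assms
proof (induction rule: leaf_tree.induct)
  case (snoc L E c p)
  then have "c \<noteq> p" and "edge c p \<notin> E"
    using edge_notin_ordered_edges[of "set L" E c] by auto
  then show ?case
    using snoc by (auto simp: ordered_edges_def edge_def min_def max_def)
qed (auto simp: ordered_edges_def)

lemma leaf_tree_imp_leaf_order: "leaf_tree F L E \<Longrightarrow> leaf_order F L"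
proof (induction rule: leaf_tree.induct)
  case (snoc L E c p)
  then show ?case unfolding leaf_order_snoc by blast
qed (simp_all add: leaf_order_def)

lemma leaf_order_imp_leaf_tree: "distinct L \<Longrightarrow> leaf_order F L \<Longrightarrow> \<exists>E. leaf_tree F L E"
proof (induction L rule: rev_induct)
  case Nil
  show ?case using leaf_tree.Nil by blast
next
  case (snoc c L)
  then obtain E where E: "leaf_tree F L E" by (auto simp: leaf_order_snoc)
  show ?case
  proof (cases "L = []")
    case True
    then show ?thesis using leaf_tree.single by auto
  next
    case False
    then obtain p where p: "p \<in> set L" "\<forall>h\<in>set L. F h \<inter> F c \<subseteq> F p"
      using snoc.prems by (auto simp: leaf_order_snoc)
    have "c \<notin> set L" using snoc.prems(1) by simp
    then show ?thesis using leaf_tree.snoc[OF E False _ p] by blast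
  qed
qed

lemma leaf_tree_exact_choice:
  assumes "leaf_tree F L E" and "j \<in> set L"
  shows "\<exists>s. exact_choice F (set L) E j s"
  using assms
proof (induction arbitrary: j rule: leaf_tree.induct)
  case Nil
  then show ?case by simp
next
  case (single c)
  then show ?case by (auto simp: exact_choice_def rooted_choice_def bij_betw_def disjoint_family_on_def)
next
  case (snoc L E c p)
  have E: "ordered_edges (set L) E" using leaf_tree_edges[OF snoc.hyps(1)] by blast
  have j: "j \<in> insert c (set L)" using snoc.prems by simp
  obtain s where "exact_choice F (set L) E (if j = c then p else j) s"
    using snoc.IH snoc.hyps(4) j by (cases "j = c") auto
  then show ?case
    using exact_choice_add_leaf[OF E snoc.hyps(3,4) j snoc.hyps(5)] by auto
qed

lemma leaf_tree_rooted_choice_unique: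
  assumes "leaf_tree F L E" and "j \<in> set L"
    and "rooted_choice (set L) E j s" and "rooted_choice (set L) E j s'" and "e \<in> E"
  shows "s e = s' e"
  using assms
proof (induction arbitrary: j rule: leaf_tree.induct)
  case (snoc L E c p)
  have E: "ordered_edges (set L) E" using leaf_tree_edges[OF snoc.hyps(1)] by blast
  have j: "j \<in> insert c (set L)" using snoc.prems by simp
  have s: "rooted_choice (insert c (set L)) (insert (edge c p) E) j s"
    and s': "rooted_choice (insert c (set L)) (insert (edge c p) E) j s'"
    using snoc.prems(2,3) by simp_all
  note remove = rooted_choice_remove_leaf[OF E snoc.hyps(3,4) j]
  have "s (edge c p) = s' (edge c p)"
    using remove(1)[OF s] remove(1)[OF s'] by simp
  moreover have "s e = s' e" if "e \<in> E"
  proof -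
    have "(if j = c then p else j) \<in> set L" using j snoc.hyps(4) by auto
    then show ?thesis using snoc.IH remove(2)[OF s] remove(2)[OF s'] that by blast
  qed
  ultimately show ?case using snoc.prems(4) by auto
qed auto

lemma exists_pendant_edge:
  assumes V: "finite V" and E: "ordered_edges V E" and card: "card E = card V - 1"
    and two: "2 \<le> card V" and roots: "\<forall>j\<in>V. \<exists>s. rooted_choice V E j s"
  obtains c p E' where "c \<in> V" "p \<in> V - {c}" "E = insert (edge c p) E'"
    "ordered_edges (V - {c}) E'"
proof -
  let ?deg = "\<lambda>v. card {e\<in>E. v \<in> endpoints e}"
  have finE: "finite E" using ordered_edges_finite[OF V E] .
  obtain c where c: "c \<in> V" and deg: "?deg c < 2"
  proof (rule ccontr)
    assume "\<not> thesis"
    then have "(\<Sum>v\<in>V. 2) \<le> (\<Sum>v\<in>V. ?deg v)"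
      using that by (intro sum_mono) (meson not_le)
    then show False using degree_sum[OF V E] card two by simp
  qed
  obtain j where j: "j \<in> V" "j \<noteq> c"
    using two c by (metis card_le_Suc0_iff_eq not_less_eq_eq numeral_2_eq_2 V)
  obtain s where "rooted_choice V E j s" using roots j by blast
  then obtain e0 where e0: "e0 \<in> E" "c \<in> endpoints e0"
    unfolding rooted_choice_def bij_betw_def using c j by (metis Diff_iff imageE singletonD)
  have only: "e = e0" if "e \<in> E" "c \<in> endpoints e" for e
  proof (rule ccontr)
    assume "e \<noteq> e0"
    then have "card {e, e0} \<le> ?deg c"
      using that e0 finE by (intro card_mono) auto
    then show False using deg \<open>e \<noteq> e0\<close> by simp
  qed
  define p where "p = other_end e0 c"
  have e0_edge: "e0 = edge c p"
    unfolding p_def using E e0 by (intro edge_other_end) (auto simp: ordered_edges_def)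
  have "p \<in> V - {c}"
    using E e0 unfolding e0_edge by (auto simp: ordered_edges_def edge_def min_def max_def split: if_splits)
  moreover have "ordered_edges (V - {c}) (E - {e0})"
    using E only by (auto simp: ordered_edges_def endpoints_def)
  ultimately show ?thesis
    using that c e0 e0_edge by (metis insert_Diff)
qed

lemma leaf_tree_at_most_one_vertex:
  assumes "finite V" and "card V \<le> 1" and "ordered_edges V E" and "card E = card V - 1"
  shows "\<exists>L. leaf_tree F L E \<and> set L = V"
proof -
  have "E = {}"
    using assms ordered_edges_finite[OF assms(1,3)] by simp
  moreover consider "V = {}" | v where "V = {v}"
    using card_le_Suc0_iff_eq[OF assms(1)] assms(2) by auto
  ultimately show ?thesis
    using leaf_tree.Nil leaf_tree.single by (metis empty_set list.simps(15))
qed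

lemma exact_choices_imp_leaf_tree:
  assumes "finite V" and "ordered_edges V E" and "card E = card V - 1"
    and "\<forall>j\<in>V. \<exists>s. exact_choice F V E j s"
  shows "\<exists>L. leaf_tree F L E \<and> set L = V"
  using assms
proof (induction V arbitrary: E rule: finite_psubset_induct)
  case (psubset V)
  show ?case
  proof (cases "card V \<le> 1")
    case True
    then show ?thesis
      using leaf_tree_at_most_one_vertex[OF psubset.hyps(1)] psubset.prems(1,2) by blast
  next
    case False
    then obtain c p E' where c: "c \<in> V" and p: "p \<in> V - {c}" and E: "E = insert (edge c p) E'"
      and E': "ordered_edges (V - {c}) E'"
      using exists_pendant_edge[OF psubset.hyps(1) psubset.prems(1,2)] psubset.prems(3)
      by (metis exact_choice_def not_le_imp_less Suc_1 Suc_leI)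
    have V: "V = insert c (V - {c})" using c by auto
    have c': "c \<notin> V - {c}" by simp
    have exact: "\<forall>j\<in>V. \<exists>s. exact_choice F (insert c (V - {c})) (insert (edge c p) E') j s"
      using psubset.prems(3) E V by simp
    have leaf: "\<forall>h\<in>V - {c}. F h \<inter> F c \<subseteq> F p"
      using exact exact_choice_leaf_inter[OF E' c' p] by blast
    have exact': "\<forall>j\<in>V - {c}. \<exists>s. exact_choice F (V - {c}) E' j s"
      using exact exact_choice_remove_leaf[OF E' c' p _ leaf] by blast
    have "edge c p \<notin> E'" using edge_notin_ordered_edges[OF E' c'] .
    then have card': "card E' = card (V - {c}) - 1"
      using psubset.prems(2) E c psubset.hyps(1) ordered_edges_finite[OF _ E'] by (simp add: card_Diff_singleton)
    have "V - {c} \<subset> V" using c by blast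
    from psubset.IH[OF this E' card' exact']
    obtain L where L: "leaf_tree F L E'" "set L = V - {c}" by blast
    have "p \<in> set L" using L(2) p by simp
    then have "L \<noteq> []" by auto
    have "leaf_tree F (L @ [c]) (insert (edge c p) E')"
      by (rule leaf_tree.snoc[OF L(1) \<open>L \<noteq> []\<close>]) (use L(2) p leaf in auto)
    moreover have "set (L @ [c]) = V" using L(2) c by auto
    ultimately show ?thesis unfolding E by blast
  qed
qed

section \<open>Quasi-trees\<close>

lemma facets_generated:
  assumes "S \<subseteq> facets \<Delta>"
  shows "facets (generated S) = S"
  using assms unfolding facets_def generated_def by blast

lemma is_leaf_prefix_iff:
  assumes Gs: "distinct Gs" "set Gs \<subseteq> facets \<Delta>" and i: "i < length Gs"
  shows "is_leaf (generated (set (take (Suc i) Gs))) (Gs ! i) \<longleftrightarrow>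
    (0 < i \<longrightarrow> (\<exists>k<i. \<forall>h<i. Gs ! h \<inter> Gs ! i \<subseteq> Gs ! k))"
proof -
  let ?P = "(!) Gs ` {0..<i}"
  have S: "set (take (Suc i) Gs) = insert (Gs ! i) ?P"
  proof -
    have "set (take (Suc i) Gs) = (!) Gs ` {0..<Suc i}" using i by (simp add: nth_image)
    also have "{0..<Suc i} = insert i {0..<i}" by auto
    finally show ?thesis by simp
  qed
  have notin: "Gs ! i \<notin> ?P"
    using i Gs(1) by (auto simp: nth_eq_iff_index_eq)
  have "set (take (Suc i) Gs) \<subseteq> facets \<Delta>"
    using set_take_subset[of "Suc i" Gs] Gs(2) by blast
  then have facets: "facets (generated (set (take (Suc i) Gs))) = insert (Gs ! i) ?P"
    by (simp only: facets_generated S)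
  have "insert (Gs ! i) ?P = {Gs ! i} \<longleftrightarrow> ?P = {}" using notin by blast
  then have single: "insert (Gs ! i) ?P = {Gs ! i} \<longleftrightarrow> i = 0" by simp
  have "H \<noteq> Gs ! i" if "H \<in> ?P" for H using that notin by auto
  then have "is_leaf (generated (set (take (Suc i) Gs))) (Gs ! i) \<longleftrightarrow>
      i = 0 \<or> (\<exists>G\<in>?P. \<forall>H\<in>?P. H \<inter> Gs ! i \<subseteq> G)"
    unfolding is_leaf_def facets single by (auto simp: Int_subset_iff)
  also have "(\<exists>G\<in>?P. \<forall>H\<in>?P. H \<inter> Gs ! i \<subseteq> G) \<longleftrightarrow> (\<exists>k<i. \<forall>h<i. Gs ! h \<inter> Gs ! i \<subseteq> Gs ! k)"
    unfolding bex_simps ball_simps by (simp add: Ball_def Bex_def)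
  finally show ?thesis by auto
qed

lemma quasi_tree_iff_facet_leaf_order:
  "quasi_tree \<Delta> \<longleftrightarrow> (\<exists>Gs. distinct Gs \<and> set Gs = facets \<Delta> \<and> leaf_order id Gs)"
proof -
  have "(\<forall>i<length Gs. is_leaf (generated (set (take (Suc i) Gs))) (Gs ! i)) \<longleftrightarrow> leaf_order id Gs"
    if "distinct Gs" "set Gs = facets \<Delta>" for Gs
    using is_leaf_prefix_iff[OF that(1) equalityD1[OF that(2)]] by (simp add: leaf_order_def)
  then show ?thesis unfolding quasi_tree_def by blast
qed

lemma ex_distinct_set_eq_iff_indices:
  assumes xs: "distinct xs"
  shows "(\<exists>ys. distinct ys \<and> set ys = set xs \<and> P ys) \<longleftrightarrow>
    (\<exists>L. distinct L \<and> set L = {0..<length xs} \<and> P (map ((!) xs) L))"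
proof -
  have inj: "inj_on ((!) xs) {0..<length xs}" using xs by (simp add: inj_on_nth)
  have img: "(!) xs ` {0..<length xs} = set xs" by (simp add: nth_image)
  show ?thesis
  proof
    assume "\<exists>ys. distinct ys \<and> set ys = set xs \<and> P ys"
    then obtain ys where ys: "distinct ys" "set ys = set xs" "P ys" by blast
    define L where "L = map (inv_into {0..<length xs} ((!) xs)) ys"
    have "map ((!) xs) L = ys"
      unfolding L_def map_map
    proof (rule map_idI)
      fix y assume "y \<in> set ys"
      then have "y \<in> (!) xs ` {0..<length xs}" using ys(2) img by simp
      then show "((!) xs \<circ> inv_into {0..<length xs} ((!) xs)) y = y" by (simp add: f_inv_into_f)
    qed
    moreover have "distinct L"
      unfolding L_def using ys(1,2) img by (simp add: distinct_map inj_on_inv_into)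
    moreover have "set L = inv_into {0..<length xs} ((!) xs) ` (!) xs ` {0..<length xs}"
      unfolding L_def using ys(2) img by simp
    then have "set L = {0..<length xs}"
      by (simp only: inv_into_image_cancel[OF inj subset_refl])
    ultimately show "\<exists>L. distinct L \<and> set L = {0..<length xs} \<and> P (map ((!) xs) L)"
      using ys(3) by metis
  next
    assume "\<exists>L. distinct L \<and> set L = {0..<length xs} \<and> P (map ((!) xs) L)"
    then obtain L where "distinct L" "set L = {0..<length xs}" "P (map ((!) xs) L)" by blast
    then show "\<exists>ys. distinct ys \<and> set ys = set xs \<and> P ys"
      using inj img by (intro exI[of _ "map ((!) xs) L"]) (simp add: distinct_map)
  qed
qed

lemma quasi_tree_iff_leaf_order:
  assumes "distinct Fs" and "set Fs = facets \<Delta>"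
  shows "quasi_tree \<Delta> \<longleftrightarrow> (\<exists>L. distinct L \<and> set L = {0..<length Fs} \<and> leaf_order ((!) Fs) L)"
  unfolding quasi_tree_iff_facet_leaf_order assms(2)[symmetric]
    ex_distinct_set_eq_iff_indices[OF assms(1)] leaf_order_map by simp

lemma facet_above:
  assumes "finite \<Delta>" and "A \<in> \<Delta>"
  shows "\<exists>G\<in>facets \<Delta>. A \<subseteq> G"
proof -
  obtain G where "G \<in> {B\<in>\<Delta>. A \<subseteq> B}" "\<forall>B\<in>{B\<in>\<Delta>. A \<subseteq> B}. G \<subseteq> B \<longrightarrow> G = B"
    using finite_has_maximal[of "{B\<in>\<Delta>. A \<subseteq> B}"] assms by auto
  then have "G \<in> facets \<Delta>" and "A \<subseteq> G"
    unfolding facets_def by (auto dest: subset_trans)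
  then show ?thesis by blast
qed

lemma simplicial_complex_facets:
  assumes "simplicial_complex n \<Delta>"
  shows "\<Union> (facets \<Delta>) = {1..n}" and "F \<in> facets \<Delta> \<Longrightarrow> finite F"
proof -
  have \<Delta>: "\<Delta> \<subseteq> Pow {1..n}" "\<forall>i\<in>{1..n}. {i} \<in> \<Delta>"
    using assms by (auto simp: simplicial_complex_def)
  have "finite \<Delta>" using \<Delta>(1) by (rule finite_subset) simp
  then have "{1..n} \<subseteq> \<Union> (facets \<Delta>)"
    using facet_above \<Delta>(2) by blast
  moreover have "facets \<Delta> \<subseteq> Pow {1..n}"
    using \<Delta>(1) by (auto simp: facets_def)
  ultimately show "\<Union> (facets \<Delta>) = {1..n}" by blast
  show "F \<in> facets \<Delta> \<Longrightarrow> finite F"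
    using \<open>facets \<Delta> \<subseteq> Pow {1..n}\<close> by (meson PowD finite_atLeastAtMost finite_subset subsetD)
qed

section \<open>Squarefree monomials\<close>

definition set_exponent :: "nat set \<Rightarrow> (nat \<Rightarrow>\<^sub>0 nat)" where
  "set_exponent S = (\<Sum>i\<in>S. Poly_Mapping.single i 1)"

lemma lookup_set_exponent:
  "finite S \<Longrightarrow> Poly_Mapping.lookup (set_exponent S) x = of_bool (x \<in> S)"
  by (induction S rule: finite_induct) (auto simp: set_exponent_def lookup_add lookup_single when_def)

lemma xprod_eq_single:
  "finite S \<Longrightarrow> (xprod S :: 'k::field mpoly) = Poly_Mapping.single (set_exponent S) 1"
  by (induction S rule: finite_induct) (simp_all add: xprod_def set_exponent_def var_def mult_single)

lemma prod_xprod_eq_single: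
  assumes "finite I" and "\<forall>i\<in>I. finite (D i)"
  shows "(\<Prod>i\<in>I. xprod (D i) :: 'k::field mpoly) = Poly_Mapping.single (\<Sum>i\<in>I. set_exponent (D i)) 1"
  using assms by (induction I rule: finite_induct) (simp_all add: xprod_eq_single mult_single)

lemma card_indices_eq_indicator_iff:
  assumes "finite I"
  shows "(\<forall>x. card {i\<in>I. x \<in> D i} = of_bool (x \<in> S)) \<longleftrightarrow>
    disjoint_family_on D I \<and> (\<Union>i\<in>I. D i) = S"
proof
  assume count: "\<forall>x. card {i\<in>I. x \<in> D i} = of_bool (x \<in> S)"
  have "i = i'" if "i \<in> I" "i' \<in> I" "x \<in> D i" "x \<in> D i'" for i i' x
  proof (rule ccontr)
    assume "i \<noteq> i'"
    then have "card {i, i'} \<le> card {i\<in>I. x \<in> D i}"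
      using that assms by (intro card_mono) auto
    then show False using count \<open>i \<noteq> i'\<close> by (cases "x \<in> S") auto
  qed
  then have "disjoint_family_on D I" by (auto simp: disjoint_family_on_def)
  moreover have "x \<in> (\<Union>i\<in>I. D i) \<longleftrightarrow> x \<in> S" for x
  proof -
    have "card {i\<in>I. x \<in> D i} = 0 \<longleftrightarrow> {i\<in>I. x \<in> D i} = {}" using assms by simp
    then show ?thesis using count[rule_format, of x] by (cases "x \<in> S") auto
  qed
  ultimately show "disjoint_family_on D I \<and> (\<Union>i\<in>I. D i) = S" by blast
next
  assume "disjoint_family_on D I \<and> (\<Union>i\<in>I. D i) = S"
  then have disj: "disjoint_family_on D I" and U: "(\<Union>i\<in>I. D i) = S" by blast+
  show "\<forall>x. card {i\<in>I. x \<in> D i} = of_bool (x \<in> S)"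
  proof
    fix x
    show "card {i\<in>I. x \<in> D i} = of_bool (x \<in> S)"
    proof (cases "x \<in> S")
      case True
      then obtain i where "i \<in> I" "x \<in> D i" using U by blast
      then have "{i\<in>I. x \<in> D i} = {i}" using disj by (auto simp: disjoint_family_on_def)
      then show ?thesis using True by simp
    next
      case False
      then have "{i\<in>I. x \<in> D i} = {}" using U by blast
      with False show ?thesis by (simp only: card.empty of_bool_eq(1))
    qed
  qed
qed

lemma prod_xprod_eq_xprod_iff:
  assumes "finite I" and "\<forall>i\<in>I. finite (D i)" and "finite S"
  shows "(\<Prod>i\<in>I. xprod (D i)) = (xprod S :: 'k::field mpoly) \<longleftrightarrow>
    disjoint_family_on D I \<and> (\<Union>i\<in>I. D i) = S"
proof -
  have "(\<Prod>i\<in>I. xprod (D i)) = (xprod S :: 'k mpoly) \<longleftrightarrow>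
      (\<Sum>i\<in>I. set_exponent (D i)) = set_exponent S"
    unfolding prod_xprod_eq_single[OF assms(1,2)] xprod_eq_single[OF assms(3)]
    by (metis lookup_single_eq lookup_single_not_eq one_neq_zero)
  also have "\<dots> \<longleftrightarrow> (\<forall>x. card {i\<in>I. x \<in> D i} = of_bool (x \<in> S))"
    using assms by (simp add: poly_mapping_eq_iff fun_eq_iff lookup_sum lookup_set_exponent
        Collect_conj_eq)
  also have "\<dots> \<longleftrightarrow> disjoint_family_on D I \<and> (\<Union>i\<in>I. D i) = S"
    by (rule card_indices_eq_indicator_iff[OF assms(1)])
  finally show ?thesis .
qed

lemma lookup_sign_mult_eq_0_iff:
  assumes "c \<in> {1, -1}"
  shows "Poly_Mapping.lookup (c * q) t = 0 \<longleftrightarrow> Poly_Mapping.lookup (q :: 'k::field mpoly) t = 0"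
  using assms by auto

section \<open>Minors of M_Delta\<close>

definition skip :: "nat \<Rightarrow> nat \<Rightarrow> nat" where
  "skip j c = (if c < j then c else Suc c)"

definition unskip :: "nat \<Rightarrow> nat \<Rightarrow> nat" where
  "unskip j v = (if v < j then v else v - 1)"

lemma unskip_skip [simp]: "unskip j (skip j c) = c"
  by (simp add: skip_def unskip_def)

lemma skip_unskip: "v \<noteq> j \<Longrightarrow> skip j (unskip j v) = v"
  by (auto simp: skip_def unskip_def)

lemma bij_betw_skip: "j < t \<Longrightarrow> bij_betw (skip j) {0..<t - 1} ({0..<t} - {j})"
  by (rule bij_betw_byWitness[where f' = "unskip j"]) (auto simp: skip_def unskip_def)

lemma bij_betw_unskip: "j < t \<Longrightarrow> bij_betw (unskip j) ({0..<t} - {j}) {0..<t - 1}"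
  by (rule bij_betw_byWitness[where f' = "skip j"]) (auto simp: skip_def unskip_def)

lemma dim_del_col [simp]:
  "dim_row (del_col A j) = dim_row A" "dim_col (del_col A j) = dim_col A - 1"
  by (simp_all add: del_col_def)

lemma index_del_col:
  "r < dim_row A \<Longrightarrow> c < dim_col A - 1 \<Longrightarrow> del_col A j $$ (r, c) = A $$ (r, skip j c)"
  by (simp add: del_col_def skip_def)

lemma M_entry_endpoints:
  "fst e \<noteq> snd e \<Longrightarrow>
    M_entry Fs e k = (if k \<in> endpoints e then xprod (Fs ! k - Fs ! other_end e k) else 0)"
  by (cases e) (auto simp: M_entry_def endpoints_def other_end_def)

text \<open>Row r of the minor is the edge rs ! r and its column c is the facet skip j c, so the
  term of a permutation p takes from the row of e the entry in column perm_choice rs j p e.\<close>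
definition perm_choice :: "(nat \<times> nat) list \<Rightarrow> nat \<Rightarrow> (nat \<Rightarrow> nat) \<Rightarrow> nat \<times> nat \<Rightarrow> nat" where
  "perm_choice rs j p e = skip j (p (inv_into {0..<length rs} ((!) rs) e))"

lemma chosen_diff_cong: "s e = s' e \<Longrightarrow> chosen_diff F s e = chosen_diff F s' e"
  by (simp add: chosen_diff_def)

context
  fixes Fs :: "nat set list" and rs :: "(nat \<times> nat) list"
  assumes distinct_rows: "distinct rs" and length_rows: "length rs = length Fs - 1"
    and ordered_rows: "ordered_edges {0..<length Fs} (set rs)"
    and finite_facets: "\<forall>v<length Fs. finite (Fs ! v)"
begin

lemma bij_betw_nth_rows: "bij_betw ((!) rs) {0..<length rs} (set rs)"
  using bij_betw_nth[OF distinct_rows] by (simp add: atLeast0LessThan)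

lemma perm_choice_nth: "r < length rs \<Longrightarrow> perm_choice rs j p (rs ! r) = skip j (p r)"
  using bij_betw_nth_rows by (simp add: perm_choice_def bij_betw_def)

lemma bij_betw_perm_choice:
  assumes "j < length Fs" and "p permutes {0..<length rs}"
  shows "bij_betw (perm_choice rs j p) (set rs) ({0..<length Fs} - {j})"
proof -
  have "perm_choice rs j p = skip j \<circ> p \<circ> inv_into {0..<length rs} ((!) rs)"
    by (auto simp: perm_choice_def)
  moreover have "bij_betw (skip j) {0..<length rs} ({0..<length Fs} - {j})"
    using bij_betw_skip[OF assms(1)] length_rows by simp
  ultimately show ?thesis
    using bij_betw_inv_into[OF bij_betw_nth_rows] permutes_imp_bij[OF assms(2)]
    by (metis bij_betw_trans)
qed

lemma perm_choice_inj:
  assumes "p permutes {0..<length rs}" and "q permutes {0..<length rs}"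
    and "\<forall>e\<in>set rs. perm_choice rs j p e = perm_choice rs j q e"
  shows "p = q"
proof
  fix r
  show "p r = q r"
  proof (cases "r < length rs")
    case True
    then have "skip j (p r) = skip j (q r)"
      using assms(3) perm_choice_nth by (metis nth_mem)
    then show ?thesis by (metis unskip_skip)
  next
    case False
    then show ?thesis using assms(1,2) by (simp add: permutes_not_in)
  qed
qed

lemma rooted_choice_perm:
  assumes j: "j < length Fs" and s: "rooted_choice {0..<length Fs} (set rs) j s"
  obtains p where "p permutes {0..<length rs}" and "\<forall>e\<in>set rs. perm_choice rs j p e = s e"
proof -
  define p where "p r = (if r < length rs then unskip j (s (rs ! r)) else r)" for r
  have s_bij: "bij_betw s (set rs) ({0..<length Fs} - {j})"
    using s by (simp add: rooted_choice_def)
  have "bij_betw (unskip j \<circ> (s \<circ> (!) rs)) {0..<length rs} {0..<length rs}"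
    using bij_betw_trans[OF bij_betw_trans[OF bij_betw_nth_rows s_bij] bij_betw_unskip[OF j]]
      length_rows by simp
  moreover have "bij_betw p {0..<length rs} {0..<length rs} \<longleftrightarrow>
      bij_betw (unskip j \<circ> (s \<circ> (!) rs)) {0..<length rs} {0..<length rs}"
    by (rule bij_betw_cong) (simp add: p_def)
  ultimately have "bij_betw p {0..<length rs} {0..<length rs}" by simp
  then have perm: "p permutes {0..<length rs}"
    by (rule bij_imp_permutes) (simp add: p_def)
  have "perm_choice rs j p (rs ! r) = s (rs ! r)" if "r < length rs" for r
    using that bij_betw_apply[OF s_bij, of "rs ! r"]
    by (simp add: perm_choice_nth p_def skip_unskip)
  then have "\<forall>e\<in>set rs. perm_choice rs j p e = s e"
    by (metis in_set_conv_nth)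
  with perm that show thesis by blast
qed

lemma M_sub_minor_carrier:
  "(del_col (M_sub Fs rs) j :: 'k::field mpoly mat) \<in> carrier_mat (length rs) (length rs)"
proof (rule carrier_matI)
  show "dim_row (del_col (M_sub Fs rs) j :: 'k mpoly mat) = length rs"
    by (simp add: M_sub_def)
  show "dim_col (del_col (M_sub Fs rs) j :: 'k mpoly mat) = length rs"
    using length_rows by (simp add: M_sub_def)
qed

lemma M_sub_minor_term:
  assumes j: "j < length Fs" and p: "p permutes {0..<length rs}"
  shows "(\<Prod>r = 0..<length rs. (del_col (M_sub Fs rs) j :: 'k::field mpoly mat) $$ (r, p r)) =
    (if \<forall>e\<in>set rs. perm_choice rs j p e \<in> endpoints e
     then \<Prod>e\<in>set rs. xprod (chosen_diff ((!) Fs) (perm_choice rs j p) e) else 0)"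
proof -
  let ?s = "perm_choice rs j p"
  have "(del_col (M_sub Fs rs) j :: 'k mpoly mat) $$ (r, p r) = M_entry Fs (rs ! r) (?s (rs ! r))"
    if r: "r < length rs" for r
  proof -
    have pr: "p r < length rs" using permutes_in_image[OF p] r by simp
    then have "skip j (p r) < length Fs" using length_rows by (auto simp: skip_def)
    then show ?thesis using r pr length_rows by (simp add: index_del_col M_sub_def perm_choice_nth)
  qed
  then have "(\<Prod>r = 0..<length rs. (del_col (M_sub Fs rs) j :: 'k mpoly mat) $$ (r, p r)) =
      (\<Prod>r = 0..<length rs. M_entry Fs (rs ! r) (?s (rs ! r)))"
    by simp
  also have "\<dots> = (\<Prod>e\<in>set rs. M_entry Fs e (?s e))"
    by (rule prod.reindex_bij_betw[OF bij_betw_nth_rows])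
  also have "\<dots> = (\<Prod>e\<in>set rs. if ?s e \<in> endpoints e then xprod (chosen_diff ((!) Fs) ?s e) else 0)"
  proof (rule prod.cong[OF refl])
    fix e assume "e \<in> set rs"
    then have "fst e \<noteq> snd e" using ordered_rows by (auto simp: ordered_edges_def)
    then show "M_entry Fs e (?s e) =
        (if ?s e \<in> endpoints e then xprod (chosen_diff ((!) Fs) ?s e) else (0 :: 'k mpoly))"
      by (simp add: M_entry_endpoints chosen_diff_def)
  qed
  also have "\<dots> = (if \<forall>e\<in>set rs. ?s e \<in> endpoints e
      then \<Prod>e\<in>set rs. xprod (chosen_diff ((!) Fs) ?s e) else 0)"
    by (auto intro: prod_zero)
  finally show ?thesis .
qed

lemma finite_chosen_diff:
  assumes "rooted_choice {0..<length Fs} (set rs) j s" and "e \<in> set rs"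
  shows "finite (chosen_diff ((!) Fs) s e)"
proof -
  have "s e < length Fs"
    using assms ordered_rows by (auto simp: rooted_choice_def ordered_edges_def endpoints_def)
  then show ?thesis using finite_facets by (simp add: chosen_diff_def)
qed

lemma det_M_sub_minor_if_unique_exact_choice:
  assumes j: "j < length Fs" and s0: "exact_choice ((!) Fs) {0..<length Fs} (set rs) j s0"
    and unique: "\<forall>s. rooted_choice {0..<length Fs} (set rs) j s \<longrightarrow> (\<forall>e\<in>set rs. s e = s0 e)"
  shows "\<exists>c\<in>{1, -1}. det (del_col (M_sub Fs rs) j) =
    c * (xprod ((\<Union>v\<in>{0..<length Fs}. Fs ! v) - Fs ! j) :: 'k::field mpoly)"
proof -
  let ?T = "\<lambda>p. \<Prod>r = 0..<length rs. (del_col (M_sub Fs rs) j :: 'k mpoly mat) $$ (r, p r)"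
  have rooted0: "rooted_choice {0..<length Fs} (set rs) j s0"
    using s0 by (simp add: exact_choice_def)
  obtain p0 where p0: "p0 permutes {0..<length rs}" "\<forall>e\<in>set rs. perm_choice rs j p0 e = s0 e"
    using rooted_choice_perm[OF j rooted0] .
  have "?T p0 = (\<Prod>e\<in>set rs. xprod (chosen_diff ((!) Fs) (perm_choice rs j p0) e))"
    using M_sub_minor_term[OF j p0(1)] p0(2) rooted0 by (simp add: rooted_choice_def)
  also have "\<dots> = (\<Prod>e\<in>set rs. xprod (chosen_diff ((!) Fs) s0 e))"
    using p0(2) by (intro prod.cong refl arg_cong[where f = xprod] chosen_diff_cong) auto
  also have "\<dots> = xprod ((\<Union>v\<in>{0..<length Fs}. Fs ! v) - Fs ! j)"
    using s0 finite_chosen_diff[OF rooted0] finite_facets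
    by (subst prod_xprod_eq_xprod_iff) (auto simp: exact_choice_def)
  finally have T0: "?T p0 = xprod ((\<Union>v\<in>{0..<length Fs}. Fs ! v) - Fs ! j)" .
  have T: "?T p = 0" if p: "p permutes {0..<length rs}" and "p \<noteq> p0" for p
  proof (rule ccontr)
    assume "?T p \<noteq> 0"
    then have "\<forall>e\<in>set rs. perm_choice rs j p e \<in> endpoints e"
      using M_sub_minor_term[OF j p] by (auto split: if_splits)
    then have "rooted_choice {0..<length Fs} (set rs) j (perm_choice rs j p)"
      using bij_betw_perm_choice[OF j p] by (simp add: rooted_choice_def)
    then have "\<forall>e\<in>set rs. perm_choice rs j p e = perm_choice rs j p0 e"
      using unique p0(2) by auto
    then show False using perm_choice_inj[OF p p0(1)] \<open>p \<noteq> p0\<close> by blast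
  qed
  have "det (del_col (M_sub Fs rs) j :: 'k mpoly mat) =
      (\<Sum>p | p permutes {0..<length rs}. of_int (sign p) * ?T p)"
    by (rule det_def'[OF M_sub_minor_carrier])
  also have "\<dots> = of_int (sign p0) * ?T p0 +
      (\<Sum>p \<in> {p. p permutes {0..<length rs}} - {p0}. of_int (sign p) * ?T p)"
    using p0(1) by (simp add: sum.remove finite_permutations)
  also have "(\<Sum>p \<in> {p. p permutes {0..<length rs}} - {p0}. of_int (sign p) * ?T p) = 0"
  proof (rule sum.neutral, rule ballI)
    fix p assume "p \<in> {p. p permutes {0..<length rs}} - {p0}"
    then have "?T p = 0" using T by blast
    then show "of_int (sign p) * ?T p = 0" by simp
  qed
  finally show ?thesis
    using T0 signof_pm_one[of p0] by auto
qed

lemma exact_choice_if_det_M_sub_minor: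
  assumes j: "j < length Fs" and c: "c \<in> {1, -1}"
    and det: "det (del_col (M_sub Fs rs) j) =
      c * (xprod ((\<Union>v\<in>{0..<length Fs}. Fs ! v) - Fs ! j) :: 'k::field mpoly)"
  shows "\<exists>s. exact_choice ((!) Fs) {0..<length Fs} (set rs) j s"
proof -
  let ?T = "\<lambda>p. \<Prod>r = 0..<length rs. (del_col (M_sub Fs rs) j :: 'k mpoly mat) $$ (r, p r)"
  let ?S = "(\<Union>v\<in>{0..<length Fs}. Fs ! v) - Fs ! j"
  have finS: "finite ?S" using finite_facets by auto
  have "Poly_Mapping.lookup (det (del_col (M_sub Fs rs) j) :: 'k mpoly) (set_exponent ?S) \<noteq> 0"
    unfolding det using c by (simp add: lookup_sign_mult_eq_0_iff xprod_eq_single[OF finS])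
  then obtain p where p: "p permutes {0..<length rs}"
    and "Poly_Mapping.lookup (of_int (sign p) * ?T p) (set_exponent ?S) \<noteq> 0"
    unfolding det_def'[OF M_sub_minor_carrier] lookup_sum
    by (auto elim: sum.not_neutral_contains_not_neutral)
  then have Tp: "Poly_Mapping.lookup (?T p) (set_exponent ?S) \<noteq> 0"
    using lookup_sign_mult_eq_0_iff[OF signof_pm_one] by blast
  let ?s = "perm_choice rs j p"
  have ends: "\<forall>e\<in>set rs. ?s e \<in> endpoints e"
  proof (rule ccontr)
    assume "\<not> (\<forall>e\<in>set rs. ?s e \<in> endpoints e)"
    then have "?T p = 0" unfolding M_sub_minor_term[OF j p] by auto
    then show False using Tp by (metis lookup_zero)
  qed
  then have rooted: "rooted_choice {0..<length Fs} (set rs) j ?s"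
    using bij_betw_perm_choice[OF j p] by (simp add: rooted_choice_def)
  have fin: "\<forall>e\<in>set rs. finite (chosen_diff ((!) Fs) ?s e)"
    using finite_chosen_diff[OF rooted] by blast
  have "Poly_Mapping.lookup (\<Prod>e\<in>set rs. xprod (chosen_diff ((!) Fs) ?s e) :: 'k mpoly)
      (set_exponent ?S) \<noteq> 0"
    using Tp ends unfolding M_sub_minor_term[OF j p] by simp
  then have "(\<Prod>e\<in>set rs. xprod (chosen_diff ((!) Fs) ?s e)) = (xprod ?S :: 'k mpoly)"
    unfolding prod_xprod_eq_single[OF finite_set fin] xprod_eq_single[OF finS]
    by (simp add: lookup_single when_def split: if_splits)
  then have "disjoint_family_on (chosen_diff ((!) Fs) ?s) (set rs) \<and>
      (\<Union>e\<in>set rs. chosen_diff ((!) Fs) ?s e) = ?S"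
    using prod_xprod_eq_xprod_iff[OF finite_set fin finS] by blast
  then show ?thesis using rooted by (auto simp: exact_choice_def)
qed

end

lemma leaf_order_imp_M_sub_minors:
  assumes finite_facets: "\<forall>v<length Fs. finite (Fs ! v)"
    and L: "distinct L" "set L = {0..<length Fs}" "leaf_order ((!) Fs) L"
  shows "\<exists>rs. distinct rs \<and> length rs = length Fs - 1 \<and> (\<forall>(i, j)\<in>set rs. i < j \<and> j < length Fs) \<and>
    (\<forall>j<length Fs. \<exists>c\<in>{1, -1}. det (del_col (M_sub Fs rs) j) =
       c * (xprod ((\<Union>v\<in>{0..<length Fs}. Fs ! v) - Fs ! j) :: 'k::field mpoly))"
proof -
  obtain E where tree: "leaf_tree ((!) Fs) L E"
    using leaf_order_imp_leaf_tree[OF L(1,3)] by blast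
  then have E: "ordered_edges {0..<length Fs} E" "finite E" "card E = length Fs - 1"
    using leaf_tree_edges[OF tree] L(2) distinct_card[OF L(1)] by auto
  obtain rs where rs: "set rs = E" "distinct rs"
    using finite_distinct_list[OF E(2)] by blast
  have len: "length rs = length Fs - 1"
    using rs E distinct_card[OF rs(2)] by simp
  have rs_edges: "ordered_edges {0..<length Fs} (set rs)"
    using rs(1) E(1) by simp
  have "\<exists>c\<in>{1, -1}. det (del_col (M_sub Fs rs) j) =
      c * (xprod ((\<Union>v\<in>{0..<length Fs}. Fs ! v) - Fs ! j) :: 'k mpoly)"
    if j: "j < length Fs" for j
  proof -
    obtain s0 where s0: "exact_choice ((!) Fs) {0..<length Fs} (set rs) j s0"
      using leaf_tree_exact_choice[OF tree] L(2) rs(1) j by auto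
    moreover have "\<forall>s. rooted_choice {0..<length Fs} (set rs) j s \<longrightarrow> (\<forall>e\<in>set rs. s e = s0 e)"
      using leaf_tree_rooted_choice_unique[OF tree] s0 L(2) rs(1) j by (auto simp: exact_choice_def)
    ultimately show ?thesis
      by (rule det_M_sub_minor_if_unique_exact_choice[OF rs(2) len rs_edges finite_facets j])
  qed
  moreover have "\<forall>(i, j)\<in>set rs. i < j \<and> j < length Fs"
    using rs_edges unfolding ordered_edges_atLeastLessThan .
  ultimately show ?thesis using rs(2) len by blast
qed

lemma M_sub_minors_imp_leaf_order:
  assumes finite_facets: "\<forall>v<length Fs. finite (Fs ! v)"
    and rows: "distinct rs" "length rs = length Fs - 1" "\<forall>(i, j)\<in>set rs. i < j \<and> j < length Fs"
    and minors: "\<forall>j<length Fs. \<exists>c\<in>{1, -1}. det (del_col (M_sub Fs rs) j) =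
       c * (xprod ((\<Union>v\<in>{0..<length Fs}. Fs ! v) - Fs ! j) :: 'k::field mpoly)"
  shows "\<exists>L. distinct L \<and> set L = {0..<length Fs} \<and> leaf_order ((!) Fs) L"
proof -
  have E: "ordered_edges {0..<length Fs} (set rs)"
    unfolding ordered_edges_atLeastLessThan by (rule rows(3))
  have "\<exists>s. exact_choice ((!) Fs) {0..<length Fs} (set rs) j s" if j: "j \<in> {0..<length Fs}" for j
  proof -
    have "j < length Fs" using j by simp
    moreover obtain c where "c \<in> {1, -1}" and "det (del_col (M_sub Fs rs) j) =
        c * (xprod ((\<Union>v\<in>{0..<length Fs}. Fs ! v) - Fs ! j) :: 'k mpoly)"
      using minors \<open>j < length Fs\<close> by blast
    ultimately show ?thesis
      by (rule exact_choice_if_det_M_sub_minor[OF rows(1,2) E finite_facets])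
  qed
  then have "\<forall>j\<in>{0..<length Fs}. \<exists>s. exact_choice ((!) Fs) {0..<length Fs} (set rs) j s" ..
  moreover have "card (set rs) = card {0..<length Fs} - 1"
    using rows(1,2) by (simp add: distinct_card)
  ultimately obtain L where L: "leaf_tree ((!) Fs) L (set rs)" "set L = {0..<length Fs}"
    using exact_choices_imp_leaf_tree[OF finite_atLeastLessThan E] by blast
  then show ?thesis
    using leaf_tree_edges[OF L(1)] leaf_tree_imp_leaf_order[OF L(1)] by blast
qed

lemma leaf_order_iff_M_sub_minors:
  assumes finite_facets: "\<forall>v<length Fs. finite (Fs ! v)"
  shows "(\<exists>L. distinct L \<and> set L = {0..<length Fs} \<and> leaf_order ((!) Fs) L) \<longleftrightarrow>
    (\<exists>rs. distinct rs \<and> length rs = length Fs - 1 \<and> (\<forall>(i, j)\<in>set rs. i < j \<and> j < length Fs) \<and>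
       (\<forall>j<length Fs. \<exists>c\<in>{1, -1}. det (del_col (M_sub Fs rs) j) =
          c * (xprod ((\<Union>v\<in>{0..<length Fs}. Fs ! v) - Fs ! j) :: 'k::field mpoly)))"
    (is "?leaf_order \<longleftrightarrow> ?minors")
proof
  assume ?leaf_order
  then show ?minors
    by (elim exE conjE) (rule leaf_order_imp_M_sub_minors[OF finite_facets], assumption+)
next
  assume ?minors
  then show ?leaf_order
    by (elim exE conjE) (rule M_sub_minors_imp_leaf_order[OF finite_facets], assumption+)
qed

theorem lemma2p1:
  fixes n :: nat and \<Delta> :: "nat set set" and Fs :: "nat set list"
  assumes "simplicial_complex n \<Delta>"
    and "distinct Fs" and "set Fs = facets \<Delta>"
  shows "quasi_tree \<Delta> \<longleftrightarrow>
    (\<exists>rs. distinct rs \<and> length rs = length Fs - 1 \<and>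
       (\<forall>(i, j)\<in>set rs. i < j \<and> j < length Fs) \<and>
       (\<forall>j<length Fs. \<exists>c\<in>{1, -1}.
          det (del_col (M_sub Fs rs) j) = c * (xprod ({1..n} - Fs ! j) :: 'k::field mpoly)))"
proof -
  have "(\<Union>v\<in>{0..<length Fs}. Fs ! v) = \<Union> (facets \<Delta>)"
    using assms(3) by (simp add: nth_image)
  then have U: "(\<Union>v\<in>{0..<length Fs}. Fs ! v) = {1..n}"
    using simplicial_complex_facets(1)[OF assms(1)] by simp
  have "\<forall>v<length Fs. finite (Fs ! v)"
    using simplicial_complex_facets(2)[OF assms(1)] assms(3) nth_mem by blast
  from leaf_order_iff_M_sub_minors[OF this] show ?thesis
    unfolding quasi_tree_iff_leaf_order[OF assms(2,3)] U .
qed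

end
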